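(* There is an absolute constant $C$ such that for all integers $n\ge1$ and $1\le d\le n$, every $r\in\{0,1,\dots,d-1\}$ and every $\alpha\in(0,1)$, $$\Big|\sum_{\substack{0\le l\le n\\ l\equiv r \ (\mathrm{mod}\ d)}}\binom nl\alpha^l(1-\alpha)^{n-l}-\frac1d\Big|\le \frac{C}{\sqrt{\alpha(1-\alpha)n}}.$$ *)

theory Defs
  imports Complex_Main
begin

end

theory Submission
  imports Defs "HOL-Analysis.Weierstrass_Theorems"
begin

text \<open>By summation by parts, the mass that a function \<open>q\<close> on \<open>{0..<N}\<close> puts on the residue
class \<open>r\<close> mod \<open>d\<close> is \<open>\<Sum>k. \<Delta>q(k) \<cdot> #{l \<in> [k,N). l \<equiv> r}\<close>, and these counts differ by at most 1
between residue classes. Hence any two residue classes receive masses differing by at most the total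
variation of \<open>q\<close>. The binomial distribution \<open>b\<close> is unimodal with mode \<open>m = \<lfloor>(n+1)\<alpha>\<rfloor>\<close>, so its
total variation is \<open>2 b(m)\<close>; and by the ratio of consecutive terms it stays above \<open>b(m)/2\<close> for about
\<open>\<surd>((m+1)(1-\<alpha>)/2)\<close> steps past the mode, which forces \<open>b(m) \<le> 2\<surd>2 / \<surd>(\<alpha>(1-\<alpha>)n)\<close>. Averaging over
the \<open>d\<close> classes, whose masses sum to 1, gives the theorem with \<open>C = 4\<surd>2\<close>.\<close>

lemma Suc_add_mod_eq_0_iff:
  fixes N d r :: nat assumes "r < d"
  shows "Suc (N + (d - 1 - r)) mod d = 0 \<longleftrightarrow> N mod d = r"
proof -
  have "Suc (N + (d - 1 - r)) = N + (d - r)" using assms by simp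
  then have "Suc (N + (d - 1 - r)) mod d = (N mod d + (d - r)) mod d"
    by (simp only: mod_add_left_eq)
  moreover have "(N mod d + (d - r)) mod d = 0 \<longleftrightarrow> N mod d = r"
  proof (cases "r \<le> N mod d")
    case True
    then have "N mod d + (d - r) = (N mod d - r) + d" using assms by simp
    then have "(N mod d + (d - r)) mod d = N mod d - r"
      using assms by (simp only: mod_add_self2) (simp add: less_imp_diff_less)
    then show ?thesis using True by simp
  next
    case False
    then have "0 < N mod d + (d - r)" "N mod d + (d - r) < d" using assms by auto
    then show ?thesis using False assms by simp
  qed
  ultimately show ?thesis by simp
qed

text \<open>The count is \<open>\<lceil>(N - r) / d\<rceil>\<close>, written so that no truncated subtraction occurs.\<close>

lemma card_residue_class_lessThan:
  fixes N d r :: nat assumes "r < d"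
  shows "card {l. l < N \<and> l mod d = r} = (N + (d - 1 - r)) div d"
proof (induction N)
  case 0
  then show ?case using assms by simp
next
  case (Suc N)
  have "{l. l < Suc N \<and> l mod d = r} = {l. l < N \<and> l mod d = r} \<union> (if N mod d = r then {N} else {})"
    by (auto simp: less_Suc_eq)
  then have "card {l. l < Suc N \<and> l mod d = r} = card {l. l < N \<and> l mod d = r} + (if N mod d = r then 1 else 0)"
    by auto
  also have "\<dots> = Suc (N + (d - 1 - r)) div d"
    using Suc.IH Suc_add_mod_eq_0_iff[OF assms] by (simp add: div_Suc)
  finally show ?case by simp
qed

lemma card_residue_class_interval:
  fixes N d r k :: nat assumes "r < d" "k \<le> N"
  shows "card {l. k \<le> l \<and> l < N \<and> l mod d = r} = (N + (d - 1 - r)) div d - (k + (d - 1 - r)) div d"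
proof -
  have "{l. k \<le> l \<and> l < N \<and> l mod d = r} = {l. l < N \<and> l mod d = r} - {l. l < k \<and> l mod d = r}"
    by auto
  moreover have "{l. l < k \<and> l mod d = r} \<subseteq> {l. l < N \<and> l mod d = r}" using assms by auto
  ultimately show ?thesis by (simp add: card_Diff_subset card_residue_class_lessThan[OF assms(1)])
qed

lemma residue_count_shift_bounds:
  fixes x d r s :: nat assumes "s \<le> r"
  shows "(x + (d - 1 - r)) div d \<le> (x + (d - 1 - s)) div d"
    and "(x + (d - 1 - s)) div d \<le> (x + (d - 1 - r)) div d + 1"
proof -
  show "(x + (d - 1 - r)) div d \<le> (x + (d - 1 - s)) div d"
    using assms by (intro div_le_mono) simp
  have "(x + (d - 1 - s)) div d \<le> (x + (d - 1 - r) + d) div d"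
    by (intro div_le_mono) simp
  also have "\<dots> \<le> (x + (d - 1 - r)) div d + 1"
    by (cases "d = 0") simp_all
  finally show "(x + (d - 1 - s)) div d \<le> (x + (d - 1 - r)) div d + 1" .
qed

lemma card_residue_class_interval_diff_le_1:
  fixes N d r s k :: nat assumes "r < d" "s < d" "k \<le> N"
  shows "\<bar>real (card {l. k \<le> l \<and> l < N \<and> l mod d = r}) - real (card {l. k \<le> l \<and> l < N \<and> l mod d = s})\<bar> \<le> 1"
proof -
  have le_1: "\<bar>real (card {l. k \<le> l \<and> l < N \<and> l mod d = r}) - real (card {l. k \<le> l \<and> l < N \<and> l mod d = s})\<bar> \<le> 1"
    if "s \<le> r" "r < d" "s < d" for r s
  proof -
    define G where "G t x = (x + (d - 1 - t)) div d" for t x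
    have "G r N \<le> G s N" "G s N \<le> G r N + 1" "G r k \<le> G s k" "G s k \<le> G r k + 1"
      unfolding G_def using residue_count_shift_bounds[OF \<open>s \<le> r\<close>] by blast+
    moreover have "G t k \<le> G t N" for t
      unfolding G_def using assms by (intro div_le_mono) simp
    ultimately show ?thesis
      using card_residue_class_interval[OF that(2) assms(3)] card_residue_class_interval[OF that(3) assms(3)]
      unfolding G_def[symmetric] by (simp add: of_nat_diff)
  qed
  show ?thesis
    using le_1[OF _ assms(1,2)] le_1[OF _ assms(2,1)] by (cases "s \<le> r") (auto simp: abs_minus_commute)
qed

definition backward_diff :: "(nat \<Rightarrow> real) \<Rightarrow> nat \<Rightarrow> real" where
  "backward_diff q k = q k - (if k = 0 then 0 else q (k - 1))"

lemma sum_backward_diff: "(\<Sum>k\<le>l. backward_diff q k) = q l"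
  by (induction l) (auto simp: backward_diff_def)

lemma sum_residue_class_summation_by_parts:
  fixes q :: "nat \<Rightarrow> real"
  shows "(\<Sum>l\<in>{l. l < N \<and> l mod d = r}. q l)
       = (\<Sum>k<N. backward_diff q k * real (card {l. k \<le> l \<and> l < N \<and> l mod d = r}))"
proof -
  have "(\<Sum>l\<in>{l. l < N \<and> l mod d = r}. q l)
      = (\<Sum>l\<in>{l. l < N \<and> l mod d = r}. \<Sum>k\<in>{k\<in>{..<N}. k \<le> l}. backward_diff q k)"
  proof (rule sum.cong)
    fix l assume "l \<in> {l. l < N \<and> l mod d = r}"
    then have "{k\<in>{..<N}. k \<le> l} = {..l}" by auto
    then show "q l = (\<Sum>k\<in>{k\<in>{..<N}. k \<le> l}. backward_diff q k)" by (simp add: sum_backward_diff)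
  qed simp
  also have "\<dots> = (\<Sum>k<N. \<Sum>l\<in>{l\<in>{l. l < N \<and> l mod d = r}. k \<le> l}. backward_diff q k)"
    by (rule sum.swap_restrict) auto
  also have "\<dots> = (\<Sum>k<N. backward_diff q k * real (card {l. k \<le> l \<and> l < N \<and> l mod d = r}))"
    by (intro sum.cong) (auto intro: arg_cong[where f = card])
  finally show ?thesis .
qed

lemma sum_residue_class_diff_le_variation:
  fixes q :: "nat \<Rightarrow> real"
  assumes "r < d" "s < d"
  shows "\<bar>(\<Sum>l\<in>{l. l < N \<and> l mod d = r}. q l) - (\<Sum>l\<in>{l. l < N \<and> l mod d = s}. q l)\<bar>
       \<le> (\<Sum>k<N. \<bar>backward_diff q k\<bar>)"
proof -
  define c where "c t k = real (card {l. k \<le> l \<and> l < N \<and> l mod d = t})" for t k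
  have "\<bar>(\<Sum>l\<in>{l. l < N \<and> l mod d = r}. q l) - (\<Sum>l\<in>{l. l < N \<and> l mod d = s}. q l)\<bar>
      = \<bar>\<Sum>k<N. backward_diff q k * (c r k - c s k)\<bar>"
    unfolding sum_residue_class_summation_by_parts c_def
    by (simp add: sum_subtractf right_diff_distrib)
  also have "\<dots> \<le> (\<Sum>k<N. \<bar>backward_diff q k * (c r k - c s k)\<bar>)"
    by (rule sum_abs)
  also have "\<dots> = (\<Sum>k<N. \<bar>backward_diff q k\<bar> * \<bar>c r k - c s k\<bar>)"
    by (simp add: abs_mult)
  also have "\<dots> \<le> (\<Sum>k<N. \<bar>backward_diff q k\<bar>)"
    using card_residue_class_interval_diff_le_1[OF assms]
    by (intro sum_mono) (simp add: c_def mult_left_le)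
  finally show ?thesis .
qed

lemma variation_unimodal_eq:
  fixes q :: "nat \<Rightarrow> real"
  assumes nonneg: "\<And>k. 0 \<le> q k"
    and incr: "\<And>k. k < m \<Longrightarrow> q k \<le> q (Suc k)"
    and decr: "\<And>k. m \<le> k \<Longrightarrow> q (Suc k) \<le> q k"
  shows "(\<Sum>k\<le>j. \<bar>backward_diff q k\<bar>) = (if j \<le> m then q j else 2 * q m - q j)"
proof (induction j)
  case 0
  then show ?case using nonneg[of 0] by (simp add: backward_diff_def)
next
  case (Suc j)
  have "(\<Sum>k\<le>Suc j. \<bar>backward_diff q k\<bar>)
      = (if j \<le> m then q j else 2 * q m - q j) + \<bar>q (Suc j) - q j\<bar>"
    using Suc.IH by (simp add: backward_diff_def)
  then show ?case
    using incr[of j] decr[of j] by (cases "Suc j \<le> m"; cases "j = m") auto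
qed

lemma variation_unimodal_le:
  fixes q :: "nat \<Rightarrow> real"
  assumes nonneg: "\<And>k. 0 \<le> q k"
    and incr: "\<And>k. k < m \<Longrightarrow> q k \<le> q (Suc k)"
    and decr: "\<And>k. m \<le> k \<Longrightarrow> q (Suc k) \<le> q k"
  shows "(\<Sum>k<N. \<bar>backward_diff q k\<bar>) \<le> 2 * q m"
proof (cases N)
  case 0
  then show ?thesis using nonneg by simp
next
  case (Suc j)
  have "q j \<le> q m" if "j \<le> m"
    by (rule lift_Suc_mono_le_ivl[of "{..<m}", OF _ that]) (auto intro: incr)
  then show ?thesis
    using Suc variation_unimodal_eq[of q m j, OF assms] nonneg[of j] by (auto simp: lessThan_Suc_atMost)
qed

lemma abs_diff_mean_le:
  fixes S :: "'a \<Rightarrow> real"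
  assumes "finite A" "A \<noteq> {}" "\<And>s. s \<in> A \<Longrightarrow> \<bar>S r - S s\<bar> \<le> c"
  shows "\<bar>S r - sum S A / real (card A)\<bar> \<le> c"
proof -
  have card_pos: "real (card A) > 0" using assms(1,2) by (simp add: card_gt_0_iff)
  have "S r - sum S A / real (card A) = (\<Sum>s\<in>A. S r - S s) / real (card A)"
    using card_pos by (simp add: sum_subtractf field_simps)
  then have "\<bar>S r - sum S A / real (card A)\<bar> = \<bar>\<Sum>s\<in>A. S r - S s\<bar> / real (card A)"
    by simp
  also have "\<dots> \<le> (\<Sum>s\<in>A. \<bar>S r - S s\<bar>) / real (card A)"
    using card_pos by (intro divide_right_mono sum_abs) simp
  also have "\<dots> \<le> (\<Sum>s\<in>A. c) / real (card A)"
    using card_pos assms(3) by (intro divide_right_mono sum_mono) auto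
  also have "\<dots> = c" using card_pos by simp
  finally show ?thesis .
qed

lemma Bernstein_eq_0: "n < k \<Longrightarrow> Bernstein n k x = 0"
  by (simp add: Bernstein_def)

lemma Bernstein_Suc_ratio:
  "Bernstein n (Suc k) x * (real (Suc k) * (1 - x)) = Bernstein n k x * (real (n - k) * x)"
proof (cases "k < n")
  case True
  have binom: "real (Suc k) * real (n choose Suc k) = real (n - k) * real (n choose k)"
    by (metis binomial_absorb_comp binomial_absorption of_nat_mult)
  have pow: "(1 - x) ^ (n - k) = (1 - x) ^ (n - Suc k) * (1 - x)"
    using True by (metis Suc_diff_Suc power_Suc2)
  define Q where "Q = x ^ k * x * ((1 - x) ^ (n - Suc k) * (1 - x))"
  have "Bernstein n (Suc k) x * (real (Suc k) * (1 - x)) = (real (Suc k) * real (n choose Suc k)) * Q"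
    by (simp add: Bernstein_def Q_def mult_ac)
  also have "\<dots> = Bernstein n k x * (real (n - k) * x)"
    unfolding binom by (simp add: Bernstein_def Q_def pow mult_ac)
  finally show ?thesis .
next
  case False
  then show ?thesis by (simp add: Bernstein_def)
qed

lemma Bernstein_mono_below_mode:
  assumes x: "0 < x" "x < 1" and k: "real (Suc k) \<le> real (Suc n) * x"
  shows "Bernstein n k x \<le> Bernstein n (Suc k) x"
proof -
  have "real (Suc n) * x < real (Suc n)" using x by simp
  then have "k < n" using k by linarith
  then have "real (Suc k) * (1 - x) \<le> real (n - k) * x"
    using k by (simp add: of_nat_diff algebra_simps)
  then have "Bernstein n k x * (real (Suc k) * (1 - x)) \<le> Bernstein n (Suc k) x * (real (Suc k) * (1 - x))"
    unfolding Bernstein_Suc_ratio using x by (intro mult_left_mono Bernstein_nonneg) auto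
  then show ?thesis using x by simp
qed

lemma Bernstein_antimono_above_mode:
  assumes x: "0 < x" "x < 1" and k: "real (Suc n) * x < real (Suc k)"
  shows "Bernstein n (Suc k) x \<le> Bernstein n k x"
proof (cases "k < n")
  case True
  then have "real (n - k) * x \<le> real (Suc k) * (1 - x)"
    using k by (simp add: of_nat_diff algebra_simps)
  then have "Bernstein n (Suc k) x * (real (Suc k) * (1 - x)) \<le> Bernstein n k x * (real (Suc k) * (1 - x))"
    unfolding Bernstein_Suc_ratio using x by (intro mult_left_mono Bernstein_nonneg) auto
  then show ?thesis using x by simp
next
  case False
  then show ?thesis using x by (simp add: Bernstein_eq_0 Bernstein_nonneg)
qed

lemma Bernstein_Suc_lower:
  assumes x: "0 < x" "x < 1" and m: "real m \<le> real (Suc n) * x" and "m \<le> k"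
  shows "Bernstein n k x * (1 - real (Suc k - m) / (real (Suc m) * (1 - x))) \<le> Bernstein n (Suc k) x"
proof -
  define B where "B = real (Suc m) * (1 - x)"
  define X where "X = real (Suc k) * (1 - x)"
  define s where "s = real (Suc k - m)"
  have "0 < B" "B \<le> X" unfolding B_def X_def using x \<open>m \<le> k\<close> by (auto intro: mult_right_mono)
  have "X - s \<le> real (n - k) * x"
  proof -
    have "X - s = real m - real (Suc k) * x" unfolding X_def s_def using \<open>m \<le> k\<close> by (simp add: of_nat_diff algebra_simps)
    also have "\<dots> \<le> (real n - real k) * x" using m by (simp add: algebra_simps)
    also have "\<dots> \<le> real (n - k) * x" using x by (intro mult_right_mono) auto
    finally show ?thesis .
  qed
  then have "Bernstein n k x * (X - s) \<le> Bernstein n (Suc k) x * X"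
    unfolding X_def Bernstein_Suc_ratio using x by (intro mult_left_mono Bernstein_nonneg) auto
  then have "Bernstein n k x * (1 - s / X) \<le> Bernstein n (Suc k) x"
    using \<open>0 < B\<close> \<open>B \<le> X\<close> by (simp add: field_simps)
  moreover have "Bernstein n k x * (1 - s / B) \<le> Bernstein n k x * (1 - s / X)"
    using \<open>0 < B\<close> \<open>B \<le> X\<close> x unfolding s_def
    by (intro mult_left_mono Bernstein_nonneg divide_left_mono diff_left_mono) auto
  ultimately show ?thesis unfolding s_def B_def by linarith
qed

lemma Bernstein_lower_near_mode:
  assumes x: "0 < x" "x < 1" and m: "real m \<le> real (Suc n) * x"
  shows "Bernstein n m x * (1 - real j ^ 2 / (real (Suc m) * (1 - x))) \<le> Bernstein n (m + j) x"
proof (induction j)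
  case 0
  then show ?case by simp
next
  case (Suc j)
  define B where "B = real (Suc m) * (1 - x)"
  have "0 < B" unfolding B_def using x by simp
  have nonneg: "0 \<le> Bernstein n k x" for k using x by (simp add: Bernstein_nonneg)
  show ?case
  proof (cases "B \<le> real (Suc j) ^ 2")
    case True
    then have "Bernstein n m x * (1 - real (Suc j) ^ 2 / B) \<le> 0"
      using \<open>0 < B\<close> nonneg[of m] by (intro mult_nonneg_nonpos) (auto simp: field_simps)
    then show ?thesis using nonneg[of "m + Suc j"] unfolding B_def by linarith
  next
    case False
    have "real (j + 1) \<le> real (Suc j) ^ 2" by (simp add: power2_eq_square)
    then have "0 \<le> 1 - real (j + 1) / B" using False \<open>0 < B\<close> by (simp add: field_simps)
    have "1 - real (Suc j) ^ 2 / B \<le> (1 - real j ^ 2 / B) * (1 - real (j + 1) / B)"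
    proof -
      have "(1 - real j ^ 2 / B) * (1 - real (j + 1) / B)
          = 1 - (real j ^ 2 + real (j + 1)) / B + real j ^ 2 * real (j + 1) / B ^ 2"
        using \<open>0 < B\<close> by (simp add: field_simps power2_eq_square)
      moreover have "(real j ^ 2 + real (j + 1)) / B \<le> real (Suc j) ^ 2 / B"
        using \<open>0 < B\<close> by (intro divide_right_mono) (auto simp: power2_eq_square algebra_simps)
      moreover have "0 \<le> real j ^ 2 * real (j + 1) / B ^ 2" by simp
      ultimately show ?thesis by linarith
    qed
    then have "Bernstein n m x * (1 - real (Suc j) ^ 2 / B)
        \<le> Bernstein n m x * (1 - real j ^ 2 / B) * (1 - real (j + 1) / B)"
      using nonneg[of m] by (simp add: mult_left_mono mult.assoc)
    also have "\<dots> \<le> Bernstein n (m + j) x * (1 - real (j + 1) / B)"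
      using Suc.IH \<open>0 \<le> 1 - real (j + 1) / B\<close> unfolding B_def by (intro mult_right_mono)
    also have "\<dots> \<le> Bernstein n (m + Suc j) x"
      using Bernstein_Suc_lower[OF x m, of "m + j"] unfolding B_def by simp
    finally show ?thesis unfolding B_def .
  qed
qed

lemma Bernstein_mode_mass:
  assumes x: "0 < x" "x < 1" and m: "real m \<le> real (Suc n) * x"
    and t: "real t ^ 2 \<le> real (Suc m) * (1 - x) / 2"
  shows "Bernstein n m x * real (Suc t) \<le> 2"
proof -
  define B where "B = real (Suc m) * (1 - x)"
  have "0 < B" unfolding B_def using x by simp
  have nonneg: "0 \<le> Bernstein n k x" for k using x by (simp add: Bernstein_nonneg)
  have half: "Bernstein n m x / 2 \<le> Bernstein n (m + j) x" if "j \<le> t" for j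
  proof -
    have "real j ^ 2 \<le> B / 2"
      using t that unfolding B_def by (meson order_trans of_nat_le_iff power_mono of_nat_0_le_iff)
    then have "real j ^ 2 / B \<le> 1 / 2"
      using \<open>0 < B\<close> by (simp add: pos_divide_le_eq)
    then have "Bernstein n m x / 2 \<le> Bernstein n m x * (1 - real j ^ 2 / B)"
      using nonneg[of m] mult_left_mono[of "1 / 2" "1 - real j ^ 2 / B"] by fastforce
    then show ?thesis using Bernstein_lower_near_mode[OF x m, of j] unfolding B_def by linarith
  qed
  have "real (Suc t) * (Bernstein n m x / 2) = (\<Sum>j\<le>t. Bernstein n m x / 2)" by simp
  also have "\<dots> \<le> (\<Sum>j\<le>t. Bernstein n (m + j) x)" using half by (intro sum_mono) auto
  also have "\<dots> = (\<Sum>k\<in>(+) m ` {..t}. Bernstein n k x)" by (simp add: sum.reindex)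
  also have "\<dots> \<le> (\<Sum>k\<le>m + t + n. Bernstein n k x)" using nonneg by (intro sum_mono2) auto
  also have "\<dots> = (\<Sum>k\<le>n. Bernstein n k x)"
    by (intro sum.mono_neutral_right) (auto simp: Bernstein_eq_0)
  finally show ?thesis by (simp add: mult.commute)
qed

lemma Bernstein_mode_bound:
  assumes x: "0 < x" "x < 1" and m: "real m \<le> real (Suc n) * x" "real (Suc n) * x < real (Suc m)"
  shows "Bernstein n m x * sqrt (x * (1 - x) * real n) \<le> 2 * sqrt 2"
proof -
  define B where "B = real (Suc m) * (1 - x)"
  define t where "t = nat \<lfloor>sqrt (B / 2)\<rfloor>"
  have "0 < B" unfolding B_def using x by simp
  then have "real t = of_int \<lfloor>sqrt (B / 2)\<rfloor>" unfolding t_def by simp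
  then have t_floor: "real t \<le> sqrt (B / 2)" "sqrt (B / 2) < real t + 1"
    by (simp_all add: real_of_int_floor_add_one_gt)
  then have "real t ^ 2 \<le> B / 2"
    using \<open>0 < B\<close> by (metis of_nat_0_le_iff power_mono real_sqrt_pow2 less_imp_le divide_pos_pos zero_less_numeral)
  then have mass: "Bernstein n m x * real (Suc t) \<le> 2"
    using Bernstein_mode_mass[OF x m(1)] unfolding B_def by blast
  have "x * (1 - x) * real n \<le> real (Suc n) * x * (1 - x)" using x by (simp add: algebra_simps)
  also have "\<dots> \<le> B" unfolding B_def using m x by (intro mult_right_mono) auto
  finally have "sqrt (x * (1 - x) * real n) \<le> sqrt 2 * sqrt (B / 2)"
    by (simp add: real_sqrt_mult[symmetric])
  also have "\<dots> \<le> sqrt 2 * real (Suc t)" using t_floor by simp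
  finally have "Bernstein n m x * sqrt (x * (1 - x) * real n) \<le> Bernstein n m x * (sqrt 2 * real (Suc t))"
    using x by (intro mult_left_mono Bernstein_nonneg) auto
  also have "\<dots> = sqrt 2 * (Bernstein n m x * real (Suc t))" by simp
  also have "\<dots> \<le> sqrt 2 * 2" using mass by (intro mult_left_mono) auto
  finally show ?thesis by simp
qed

lemma Bernstein_variation_le:
  assumes x: "0 < x" "x < 1" and m: "real m \<le> real (Suc n) * x" "real (Suc n) * x < real (Suc m)"
  shows "(\<Sum>k<N. \<bar>backward_diff (\<lambda>k. Bernstein n k x) k\<bar>) \<le> 2 * Bernstein n m x"
proof (rule variation_unimodal_le)
  show "0 \<le> Bernstein n k x" for k using x by (simp add: Bernstein_nonneg)
  show "Bernstein n k x \<le> Bernstein n (Suc k) x" if "k < m" for k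
    using that m(1) by (intro Bernstein_mono_below_mode[OF x]) (simp add: order_trans)
  show "Bernstein n (Suc k) x \<le> Bernstein n k x" if "m \<le> k" for k
    using that m(2) by (intro Bernstein_antimono_above_mode[OF x]) simp
qed

theorem lemma1:
  shows "\<exists>C::real. \<forall>(n::nat) (d::nat) (r::nat) (\<alpha>::real).
    1 \<le> n \<longrightarrow> 1 \<le> d \<longrightarrow> d \<le> n \<longrightarrow> r < d \<longrightarrow> 0 < \<alpha> \<longrightarrow> \<alpha> < 1 \<longrightarrow>
    \<bar>(\<Sum>l\<in>{l. l \<le> n \<and> l mod d = r}. real (n choose l) * \<alpha> ^ l * (1 - \<alpha>) ^ (n - l)) - 1 / real d\<bar>
      \<le> C / sqrt (\<alpha> * (1 - \<alpha>) * real n)"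
proof (intro exI[of _ "4 * sqrt 2"] allI impI)
  fix n d r :: nat and \<alpha> :: real
  assume "1 \<le> n" "1 \<le> d" "d \<le> n" "r < d" and \<alpha>: "0 < \<alpha>" "\<alpha> < 1"
  define m where "m = nat \<lfloor>real (Suc n) * \<alpha>\<rfloor>"
  have "real m = of_int \<lfloor>real (Suc n) * \<alpha>\<rfloor>" unfolding m_def using \<alpha> by simp
  then have m: "real m \<le> real (Suc n) * \<alpha>" "real (Suc n) * \<alpha> < real (Suc m)"
    using floor_correct[of "real (Suc n) * \<alpha>"] unfolding of_nat_Suc by linarith+
  define S where "S s = (\<Sum>l\<in>{l. l < Suc n \<and> l mod d = s}. Bernstein n l \<alpha>)" for s
  have "\<bar>S r - S s\<bar> \<le> 2 * Bernstein n m \<alpha>" if "s < d" for s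
    using sum_residue_class_diff_le_variation[OF \<open>r < d\<close> that] Bernstein_variation_le[OF \<alpha> m]
    unfolding S_def by (rule order_trans)
  then have "\<bar>S r - sum S {..<d} / real (card {..<d})\<bar> \<le> 2 * Bernstein n m \<alpha>"
    using \<open>1 \<le> d\<close> by (intro abs_diff_mean_le) (auto simp: lessThan_empty_iff)
  moreover have "sum S {..<d} = 1"
  proof -
    have "sum S {..<d} = (\<Sum>s<d. \<Sum>l\<in>{l\<in>{..n}. l mod d = s}. Bernstein n l \<alpha>)"
      unfolding S_def by (intro sum.cong) auto
    also have "\<dots> = (\<Sum>l\<le>n. Bernstein n l \<alpha>)" using \<open>1 \<le> d\<close> by (intro sum.group) auto
    finally show ?thesis by simp
  qed
  moreover have "2 * Bernstein n m \<alpha> \<le> 4 * sqrt 2 / sqrt (\<alpha> * (1 - \<alpha>) * real n)"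
    using Bernstein_mode_bound[OF \<alpha> m] \<alpha> \<open>1 \<le> n\<close> by (simp add: field_simps)
  ultimately show "\<bar>(\<Sum>l\<in>{l. l \<le> n \<and> l mod d = r}. real (n choose l) * \<alpha> ^ l * (1 - \<alpha>) ^ (n - l)) - 1 / real d\<bar>
      \<le> 4 * sqrt 2 / sqrt (\<alpha> * (1 - \<alpha>) * real n)"
    unfolding S_def less_Suc_eq_le Bernstein_def by simp
qed

end
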